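(* LFI3 is a sublogic of classical logic: for every set of formulas $\Gamma$ and formula $\alpha$, if $\Gamma\vDash_{LFI3}\alpha$ then $\Gamma\vDash_{CPL}\alpha$.
   Context: Formulas are built from a countable set of propositional variables using unary $\neg,\circ$ and binary $\land,\lor,\to$. On $\{0,1\}$ use Boolean $\land,\lor,\to,\sim$. Let $\mathbb{B}=\{x\in\{0,1\}^3: x_1\lor x_2=1,\ x_3\lor\sim(x_1\land x_2)=1\}=\{T,t,b,f,F\}$ with $T=(1,0,0)$, $t=(1,0,1)$, $b=(1,1,1)$, $f=(0,1,1)$, $F=(0,1,0)$. The LFI3 algebra on $\mathbb{B}$ has operations: $a\dot\land b=(a_1\land b_1,\ a_2\lor b_2,\ (\sim a_2\land b_3)\lor(a_3\land\sim b_2)\lor(a_3\land b_3))$; $a\dot\lor b=(a_1\lor b_1,\ a_2\land b_2,\ (\sim a_1\land b_3)\lor(a_3\land\sim b_1)\lor(a_3\land b_3))$; $a\dot\to b=(a_1\to b_1,\ b_2\land(\sim a_2\lor a_3),\ (\sim a_2\land b_3)\lor(\sim a_2\land a_3\land\sim b_1)\lor(a_3\land b_3)\lor(\sim a_1\land a_3\land\sim b_1))$; $\dot\neg a=(a_2,a_1,a_3)$; $\dot\circ a=(\sim(a_1\land a_2),a_3,a_3\land\sim(a_1\land a_2))$. Designated set $D=\{T,t,b\}$. Valuations are homomorphisms from formulas to this algebra; $\Gamma\vDash_{LFI3}\alpha$ iff every valuation with $h[\Gamma]\subseteq D$ has $h(\alpha)\in D$. Classical logic CPL over this signature is the matrix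 logic of the two-element subalgebra $\{T,F\}$ with designated set $\{T\}$ (i.e. the usual two-valued tables for $\neg,\land,\lor,\to$, with $\circ\alpha$ always true). *)

theory Defs
  imports Main
begin

datatype fm = Var nat | Neg fm | Circ fm | And fm fm | Or fm fm | Imp fm fm

type_synonym tv = "bool \<times> bool \<times> bool"

definition BB :: "tv set" where
  "BB = {(x1, x2, x3). (x1 \<or> x2) \<and> (x3 \<or> \<not> (x1 \<and> x2))}"

definition vT :: tv where "vT = (True, False, False)"
definition vt :: tv where "vt = (True, False, True)"
definition vb :: tv where "vb = (True, True, True)"
definition vf :: tv where "vf = (False, True, True)"
definition vF :: tv where "vF = (False, True, False)"

definition andL :: "tv \<Rightarrow> tv \<Rightarrow> tv" where
  "andL a b = (case a of (a1, a2, a3) \<Rightarrow> case b of (b1, b2, b3) \<Rightarrow>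
     (a1 \<and> b1, a2 \<or> b2, (\<not> a2 \<and> b3) \<or> (a3 \<and> \<not> b2) \<or> (a3 \<and> b3)))"

definition orL :: "tv \<Rightarrow> tv \<Rightarrow> tv" where
  "orL a b = (case a of (a1, a2, a3) \<Rightarrow> case b of (b1, b2, b3) \<Rightarrow>
     (a1 \<or> b1, a2 \<and> b2, (\<not> a1 \<and> b3) \<or> (a3 \<and> \<not> b1) \<or> (a3 \<and> b3)))"

definition impL :: "tv \<Rightarrow> tv \<Rightarrow> tv" where
  "impL a b = (case a of (a1, a2, a3) \<Rightarrow> case b of (b1, b2, b3) \<Rightarrow>
     (a1 \<longrightarrow> b1, b2 \<and> (\<not> a2 \<or> a3),
      (\<not> a2 \<and> b3) \<or> (\<not> a2 \<and> a3 \<and> \<not> b1) \<or> (a3 \<and> b3) \<or> (\<not> a1 \<and> a3 \<and> \<not> b1)))"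

definition negL :: "tv \<Rightarrow> tv" where
  "negL a = (case a of (a1, a2, a3) \<Rightarrow> (a2, a1, a3))"

definition circL :: "tv \<Rightarrow> tv" where
  "circL a = (case a of (a1, a2, a3) \<Rightarrow> (\<not> (a1 \<and> a2), a3, a3 \<and> \<not> (a1 \<and> a2)))"

definition DL :: "tv set" where "DL = {vT, vt, vb}"

definition lfi3_valuation :: "(fm \<Rightarrow> tv) \<Rightarrow> bool" where
  "lfi3_valuation h \<longleftrightarrow> (\<forall>\<phi>. h \<phi> \<in> BB) \<and>
     (\<forall>\<phi>. h (Neg \<phi>) = negL (h \<phi>)) \<and>
     (\<forall>\<phi>. h (Circ \<phi>) = circL (h \<phi>)) \<and>
     (\<forall>\<phi> \<psi>. h (And \<phi> \<psi>) = andL (h \<phi>) (h \<psi>)) \<and>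
     (\<forall>\<phi> \<psi>. h (Or \<phi> \<psi>) = orL (h \<phi>) (h \<psi>)) \<and>
     (\<forall>\<phi> \<psi>. h (Imp \<phi> \<psi>) = impL (h \<phi>) (h \<psi>))"

definition lfi3_conseq :: "fm set \<Rightarrow> fm \<Rightarrow> bool" where
  "lfi3_conseq \<Gamma> \<alpha> \<longleftrightarrow>
     (\<forall>h. lfi3_valuation h \<longrightarrow> h ` \<Gamma> \<subseteq> DL \<longrightarrow> h \<alpha> \<in> DL)"

text \<open>CPL valuations: homomorphisms into the two-element algebra {T,F}, designated {T}.\<close>
definition cpl_valuation :: "(fm \<Rightarrow> tv) \<Rightarrow> bool" where
  "cpl_valuation h \<longleftrightarrow> lfi3_valuation h \<and> (\<forall>\<phi>. h \<phi> \<in> {vT, vF})"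

definition cpl_conseq :: "fm set \<Rightarrow> fm \<Rightarrow> bool" where
  "cpl_conseq \<Gamma> \<alpha> \<longleftrightarrow>
     (\<forall>h. cpl_valuation h \<longrightarrow> h ` \<Gamma> \<subseteq> {vT} \<longrightarrow> h \<alpha> = vT)"

end

theory Submission
  imports Defs
begin

lemma DL_Int_classical_values: "DL \<inter> {vT, vF} = {vT}"
  by (auto simp: DL_def vT_def vt_def vb_def vF_def)

theorem theorem12:
  fixes \<Gamma> :: "fm set" and \<alpha> :: fm
  assumes "lfi3_conseq \<Gamma> \<alpha>"
  shows "cpl_conseq \<Gamma> \<alpha>"
  unfolding cpl_conseq_def
proof (intro allI impI)
  fix h
  assume cpl: "cpl_valuation h" and premises_true: "h ` \<Gamma> \<subseteq> {vT}"
  have "lfi3_valuation h" and "h \<alpha> \<in> {vT, vF}"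
    using cpl by (auto simp: cpl_valuation_def)
  moreover have "h ` \<Gamma> \<subseteq> DL"
    using premises_true by (auto simp: DL_def)
  ultimately have "h \<alpha> \<in> DL \<inter> {vT, vF}"
    using assms by (auto simp: lfi3_conseq_def)
  then show "h \<alpha> = vT"
    by (simp add: DL_Int_classical_values)
qed

end
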